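(* Let $T$ be an $n\times n$ complex matrix with distinct eigenvalues $\lambda_1,\dots,\lambda_n$. Let $u_1,\dots,u_n$ be unit eigenvectors of $T$ with $Tu_i=\lambda_iu_i$, let $v_1,\dots,v_n$ be unit eigenvectors of $T^*$ with $T^*v_i=\overline{\lambda_i}v_i$, and let $U=(u_1|u_2|\cdots|u_n)$ and $V=(v_1|v_2|\cdots|v_n)$ be the matrices with these vectors as columns. If $T$ is unitarily equivalent to a complex symmetric matrix, then $U^*U$ and $V^*V$ have the same eigenvalues, repeated according to multiplicity.
   Context: A complex symmetric matrix is a square complex matrix $S$ with $S=S^t$. Two matrices $A,B\in M_n(\mathbb{C})$ are unitarily equivalent if $A=W^*BW$ for some unitary $W$. *)

theory Defs
  imports "Jordan_Normal_Form.Schur_Decomposition"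
begin

definition unitary_mat :: "complex mat \<Rightarrow> bool" where
  "unitary_mat W \<longleftrightarrow> W \<in> carrier_mat (dim_row W) (dim_row W)
      \<and> mat_adjoint W * W = 1\<^sub>m (dim_row W)"

definition unitarily_equivalent :: "complex mat \<Rightarrow> complex mat \<Rightarrow> bool" where
  "unitarily_equivalent A B \<longleftrightarrow>
     (\<exists>W. unitary_mat W \<and> dim_row W = dim_row B \<and> A = mat_adjoint W * B * W)"

definition complex_symmetric :: "complex mat \<Rightarrow> bool" where
  "complex_symmetric S \<longleftrightarrow> S \<in> carrier_mat (dim_row S) (dim_row S) \<and> transpose_mat S = S"

end

theory Submission
  imports Defs
begin

text \<open>Write \<open>T = W\<^sup>* S W\<close> with \<open>W\<close> unitary and \<open>S = S\<^sup>T\<close>. The antiunitary map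
  \<open>C x = W\<^sup>* conj (W x)\<close> satisfies \<open>T\<^sup>* C = C T\<close>, so \<open>C u\<^sub>i\<close> is a unit eigenvector of
  \<open>T\<^sup>*\<close> for \<open>conj \<lambda>\<^sub>i\<close>. As the \<open>\<lambda>\<^sub>i\<close> are distinct, the \<open>u\<^sub>i\<close> form a basis and every
  eigenvector of \<open>T\<^sup>*\<close> for \<open>conj \<lambda>\<^sub>i\<close> is orthogonal to all \<open>u\<^sub>j\<close> with \<open>j \<noteq> i\<close>; hence these
  eigenspaces are lines and \<open>v\<^sub>i = c\<^sub>i C u\<^sub>i\<close> with \<open>|c\<^sub>i| = 1\<close>. Since
  \<open>\<langle>C u\<^sub>j, C u\<^sub>i\<rangle> = \<langle>u\<^sub>i, u\<^sub>j\<rangle>\<close>, this gives \<open>V\<^sup>*V = D\<^sup>* (U\<^sup>*U)\<^sup>T D\<close> with \<open>D = diag c\<close>, a matrix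
  similar to \<open>(U\<^sup>*U)\<^sup>T\<close> and hence with the characteristic polynomial of \<open>U\<^sup>*U\<close>.\<close>

section \<open>Adjoints\<close>

lemma mat_adjoint_eq_mat:
  "mat_adjoint (A :: complex mat) = mat (dim_col A) (dim_row A) (\<lambda>(i, j). cnj (A $$ (j, i)))"
  unfolding mat_adjoint_def by (rule eq_matI) (auto simp: mat_of_rows_def)

lemma dim_mat_adjoint [simp]:
  "dim_row (mat_adjoint (A :: complex mat)) = dim_col A"
  "dim_col (mat_adjoint A) = dim_row A"
  by (auto simp: mat_adjoint_eq_mat)

lemma index_mat_adjoint [simp]:
  "i < dim_col A \<Longrightarrow> j < dim_row A \<Longrightarrow> mat_adjoint (A :: complex mat) $$ (i, j) = cnj (A $$ (j, i))"
  by (simp add: mat_adjoint_eq_mat)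

lemma mat_adjoint_carrier_mat [simp]:
  "A \<in> carrier_mat n m \<Longrightarrow> mat_adjoint (A :: complex mat) \<in> carrier_mat m n"
  by (auto simp: mat_adjoint_eq_mat)

lemma mat_adjoint_mult:
  assumes "A \<in> carrier_mat n m" and "B \<in> carrier_mat m k"
  shows "mat_adjoint (A * (B :: complex mat)) = mat_adjoint B * mat_adjoint A"
  using assms by (intro eq_matI) (auto simp: scalar_prod_def sum_conjugate intro!: sum.cong)

lemma mat_adjoint_cscalar_prod:
  assumes "A \<in> carrier_mat n m" and "x \<in> carrier_vec m" and "y \<in> carrier_vec n"
  shows "(A *\<^sub>v x) \<bullet>c y = x \<bullet>c (mat_adjoint (A :: complex mat) *\<^sub>v y)"
  using assms
  by (simp add: scalar_prod_def sum_distrib_left sum_distrib_right sum_conjugate, subst sum.swap)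
     (auto simp: ac_simps intro!: sum.cong)

lemma mat_adjoint_adjoint [simp]: "mat_adjoint (mat_adjoint (A :: complex mat)) = A"
  by (rule eq_matI) auto

lemma mat_adjoint_mult_vec_conjugate_symmetric:
  assumes "S \<in> carrier_mat n n" and "transpose_mat S = S" and "y \<in> carrier_vec n"
  shows "mat_adjoint (S :: complex mat) *\<^sub>v conjugate y = conjugate (S *\<^sub>v y)"
proof -
  have "S $$ (k, l) = S $$ (l, k)" if "k < n" "l < n" for k l
    using that assms(1) arg_cong[OF assms(2), of "\<lambda>M. M $$ (l, k)"] by simp
  then show ?thesis
    using assms by (intro eq_vecI) (auto simp: scalar_prod_def sum_conjugate intro!: sum.cong)
qed

lemma det_mat_adjoint:
  assumes "(A :: complex mat) \<in> carrier_mat n n"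
  shows "det (mat_adjoint A) = cnj (det A)"
proof -
  interpret cnj_hom: comm_ring_hom cnj by unfold_locales auto
  have "mat_adjoint A = transpose_mat (map_mat cnj A)"
    unfolding mat_adjoint_def by (rule eq_matI) (auto simp: mat_of_rows_def)
  then show ?thesis using assms by (simp add: det_transpose)
qed

lemma mat_of_cols_map_upt_carrier [simp]: "mat_of_cols n (map f [0..<m]) \<in> carrier_mat n m"
  by (simp add: mat_of_cols_def)

lemma index_mat_of_cols_map_upt [simp]:
  "i < n \<Longrightarrow> j < m \<Longrightarrow> mat_of_cols n (map f [0..<m]) $$ (i, j) = f j $ i"
  by (simp add: mat_of_cols_def)

section \<open>Eigenvectors for distinct eigenvalues\<close>

lemma eigenvector_row:
  assumes "T \<in> carrier_mat n n" and "eigenvector T w l" and "r < n"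
  shows "(\<Sum>c<n. T $$ (r, c) * w $ c) = l * w $ r"
proof -
  from assms have w: "w \<in> carrier_vec n" and "T *\<^sub>v w = l \<cdot>\<^sub>v w"
    by (auto simp: eigenvector_def)
  then have "(T *\<^sub>v w) $ r = l * w $ r" using \<open>r < n\<close> by auto
  then show ?thesis using assms w by (auto simp: scalar_prod_def row_def atLeast0LessThan)
qed

lemma eigenvector_combination_row:
  fixes T :: "'a :: field mat"
  assumes T: "T \<in> carrier_mat n n" and eig: "\<And>k. k \<in> K \<Longrightarrow> eigenvector T (u k) (lam k)"
    and "r < n"
  shows "(\<Sum>c<n. T $$ (r, c) * (\<Sum>k\<in>K. x k * u k $ c)) = (\<Sum>k\<in>K. x k * lam k * u k $ r)"
proof -
  have "(\<Sum>c<n. T $$ (r, c) * (\<Sum>k\<in>K. x k * u k $ c))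
      = (\<Sum>k\<in>K. x k * (\<Sum>c<n. T $$ (r, c) * u k $ c))"
    by (simp add: sum_distrib_left mult.left_commute sum.swap[of _ "{..<n}"])
  also have "\<dots> = (\<Sum>k\<in>K. x k * (lam k * u k $ r))"
    using eigenvector_row[OF T eig \<open>r < n\<close>] by simp
  finally show ?thesis by (simp add: mult.assoc)
qed

lemma eigenvector_combination_eq_0:
  fixes T :: "'a :: field mat"
  assumes T: "T \<in> carrier_mat n n" and "finite K" and "inj_on lam K"
    and eig: "\<And>k. k \<in> K \<Longrightarrow> eigenvector T (u k) (lam k)"
    and comb: "\<And>r. r < n \<Longrightarrow> (\<Sum>k\<in>K. x k * u k $ r) = 0"
    and "k \<in> K"
  shows "x k = 0"
  using \<open>finite K\<close> \<open>inj_on lam K\<close> eig comb \<open>k \<in> K\<close>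
proof (induction K arbitrary: x k rule: finite_induct)
  case empty
  then show ?case by simp
next
  case (insert a K)
  have scaled_comb: "(\<Sum>k\<in>K. (x k * (lam k - lam a)) * u k $ r) = 0" if r: "r < n" for r
  proof -
    have "(\<Sum>k\<in>insert a K. x k * lam k * u k $ r)
        = (\<Sum>c<n. T $$ (r, c) * (\<Sum>k\<in>insert a K. x k * u k $ c))"
      by (rule eigenvector_combination_row[symmetric, where T = T]) (use T insert.prems(2) r in auto)
    also have "\<dots> = 0" using insert.prems(3) by simp
    finally have "(\<Sum>k\<in>insert a K. (x k * (lam k - lam a)) * u k $ r) = 0"
      using insert.prems(3)[OF r]
      by (simp add: algebra_simps sum_subtractf flip: sum_distrib_left del: sum.insert)
    then show ?thesis using insert.hyps by simp
  qed
  have others: "x k = 0" if "k \<in> K" for k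
  proof -
    have "x k * (lam k - lam a) = 0"
      using insert.IH[OF _ _ scaled_comb that] insert.prems(1,2) by auto
    moreover have "lam k \<noteq> lam a"
      using insert.prems(1) insert.hyps(2) that by (auto simp: inj_on_def)
    ultimately show ?thesis by simp
  qed
  obtain r where "r < n" and "u a $ r \<noteq> 0"
  proof -
    have "u a \<in> carrier_vec n" and "u a \<noteq> 0\<^sub>v n"
      using insert.prems(2)[of a] T by (auto simp: eigenvector_def)
    then show ?thesis using that by (metis eq_vecI carrier_vecD index_zero_vec)
  qed
  moreover have "x a * u a $ r = 0" using insert.prems(3)[OF \<open>r < n\<close>] others insert.hyps by simp
  ultimately have "x a = 0" by simp
  then show ?case using others insert.prems(4) by auto
qed

lemma det_mat_of_cols_eigenvectors:
  fixes T :: "'a :: field mat"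
  assumes T: "T \<in> carrier_mat n n" and "inj_on lam {..<n}"
    and eig: "\<And>i. i < n \<Longrightarrow> eigenvector T (u i) (lam i)"
  shows "det (mat_of_cols n (map u [0..<n])) \<noteq> 0"
proof
  let ?U = "mat_of_cols n (map u [0..<n])"
  assume "det ?U = 0"
  then obtain x where x: "x \<in> carrier_vec n" "x \<noteq> 0\<^sub>v n" and "?U *\<^sub>v x = 0\<^sub>v n"
    using det_0_iff_vec_prod_zero[OF mat_of_cols_map_upt_carrier] by blast
  then have "(\<Sum>k<n. x $ k * u k $ r) = 0" if "r < n" for r
    using that by (auto simp: scalar_prod_def atLeast0LessThan ac_simps dest!: arg_cong[where f = "\<lambda>y. y $ r"])
  then have "x $ k = 0" if "k < n" for k
    using eigenvector_combination_eq_0[OF T _ assms(2) eig, of "\<lambda>k. x $ k"] that by auto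
  then have "x = 0\<^sub>v n" using x(1) by (intro eq_vecI) auto
  with x(2) show False ..
qed

lemma eigenvector_mat_adjoint_orthogonal:
  fixes T :: "complex mat"
  assumes T: "T \<in> carrier_mat n n" and "eigenvector T x l"
    and "eigenvector (mat_adjoint T) z m" and "l \<noteq> cnj m"
  shows "x \<bullet>c z = 0"
proof -
  from assms have x: "x \<in> carrier_vec n" and Tx: "T *\<^sub>v x = l \<cdot>\<^sub>v x"
    and z: "z \<in> carrier_vec n" and Tz: "mat_adjoint T *\<^sub>v z = m \<cdot>\<^sub>v z"
    by (auto simp: eigenvector_def)
  have "l * (x \<bullet>c z) = (T *\<^sub>v x) \<bullet>c z" using Tx x z by simp
  also have "\<dots> = x \<bullet>c (mat_adjoint T *\<^sub>v z)" by (rule mat_adjoint_cscalar_prod[OF T x z])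
  also have "\<dots> = cnj m * (x \<bullet>c z)" using Tz x z by (simp add: conjugate_smult_vec)
  finally have "(l - cnj m) * (x \<bullet>c z) = 0" by (simp add: algebra_simps)
  then show ?thesis using \<open>l \<noteq> cnj m\<close> by simp
qed

lemma parallel_if_mult_mat_vec_vanish_off_index:
  fixes A :: "'a :: field mat"
  assumes A: "A \<in> carrier_mat n n" and "det A \<noteq> 0" and "i < n"
    and z: "z \<in> carrier_vec n" and z': "z' \<in> carrier_vec n" "z' \<noteq> 0\<^sub>v n"
    and Az: "\<And>j. j < n \<Longrightarrow> j \<noteq> i \<Longrightarrow> (A *\<^sub>v z) $ j = 0"
    and Az': "\<And>j. j < n \<Longrightarrow> j \<noteq> i \<Longrightarrow> (A *\<^sub>v z') $ j = 0"
  shows "\<exists>c. z = c \<cdot>\<^sub>v z'"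
proof -
  have kernel: "y = 0\<^sub>v n" if "y \<in> carrier_vec n" and "A *\<^sub>v y = 0\<^sub>v n" for y
    using det_0_iff_vec_prod_zero[OF A] \<open>det A \<noteq> 0\<close> that by auto
  have pivot: "(A *\<^sub>v z') $ i \<noteq> 0"
  proof
    assume "(A *\<^sub>v z') $ i = 0"
    then have "(A *\<^sub>v z') $ j = 0" if "j < n" for j using Az' that by (cases "j = i") auto
    then have "A *\<^sub>v z' = 0\<^sub>v n" using A by (intro eq_vecI) auto
    with kernel z' show False by blast
  qed
  define c where "c = (A *\<^sub>v z) $ i / (A *\<^sub>v z') $ i"
  have "A *\<^sub>v (z - c \<cdot>\<^sub>v z') = 0\<^sub>v n"
  proof (rule eq_vecI)
    fix j assume "j < dim_vec (0\<^sub>v n :: 'a vec)"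
    then have "j < n" by simp
    have "(A *\<^sub>v (z - c \<cdot>\<^sub>v z')) $ j = (A *\<^sub>v z) $ j - c * (A *\<^sub>v z') $ j"
      using A z z' \<open>j < n\<close> by (simp add: mult_minus_distrib_mat_vec mult_mat_vec)
    also have "\<dots> = 0" using Az Az' \<open>j < n\<close> pivot by (cases "j = i") (auto simp: c_def)
    finally show "(A *\<^sub>v (z - c \<cdot>\<^sub>v z')) $ j = 0\<^sub>v n $ j" using \<open>j < n\<close> by simp
  qed (use A in simp)
  then have "z - c \<cdot>\<^sub>v z' = 0\<^sub>v n" using kernel z z' by simp
  then have "z $ r = c * z' $ r" if "r < n" for r
  proof -
    have "(z - c \<cdot>\<^sub>v z') $ r = 0" using \<open>z - c \<cdot>\<^sub>v z' = 0\<^sub>v n\<close> that by simp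
    then show ?thesis using z z' that by simp
  qed
  then have "z = c \<cdot>\<^sub>v z'" using z z' by (intro eq_vecI) auto
  then show ?thesis ..
qed

lemma eigenvectors_mat_adjoint_parallel:
  fixes T :: "complex mat"
  assumes T: "T \<in> carrier_mat n n" and distinct: "inj_on lam {..<n}"
    and eig: "\<And>i. i < n \<Longrightarrow> eigenvector T (u i) (lam i)" and "i < n"
    and z: "eigenvector (mat_adjoint T) z (cnj (lam i))"
    and z': "eigenvector (mat_adjoint T) z' (cnj (lam i))"
  shows "\<exists>c. z = c \<cdot>\<^sub>v z'"
proof -
  let ?U = "mat_of_cols n (map u [0..<n])"
  have u: "u j \<in> carrier_vec n" if "j < n" for j using eig[OF that] T by (auto simp: eigenvector_def)
  have "det (mat_adjoint ?U) \<noteq> 0"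
    using det_mat_adjoint[of ?U n] det_mat_of_cols_eigenvectors[OF T distinct eig] by simp
  moreover have entry: "(mat_adjoint ?U *\<^sub>v y) $ j = cnj (u j \<bullet>c y)"
    if "y \<in> carrier_vec n" and "j < n" for y j
    using that u[OF \<open>j < n\<close>] by (simp add: scalar_prod_def sum_conjugate)
  moreover have "(mat_adjoint ?U *\<^sub>v y) $ j = 0"
    if "eigenvector (mat_adjoint T) y (cnj (lam i))" and "j < n" and "j \<noteq> i" for y j
  proof -
    have "lam j \<noteq> lam i" using distinct \<open>i < n\<close> that(2,3) by (auto simp: inj_on_def)
    then have "u j \<bullet>c y = 0"
      using eigenvector_mat_adjoint_orthogonal[OF T eig[OF \<open>j < n\<close>] that(1)] by simp
    with entry show ?thesis using that T by (simp add: eigenvector_def)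
  qed
  ultimately show ?thesis
    using parallel_if_mult_mat_vec_vanish_off_index[of "mat_adjoint ?U" n i z z'] z z' T \<open>i < n\<close>
    by (auto simp: eigenvector_def)
qed

section \<open>The conjugation attached to a symmetric model\<close>

lemma unitary_mat_adjoint_mult:
  "unitary_mat W \<Longrightarrow> W \<in> carrier_mat n n \<Longrightarrow> mat_adjoint W * W = 1\<^sub>m n"
  by (simp add: unitary_mat_def)

lemma unitary_mat_mult_adjoint:
  "unitary_mat W \<Longrightarrow> W \<in> carrier_mat n n \<Longrightarrow> W * mat_adjoint W = 1\<^sub>m n"
  by (rule mat_mult_left_right_inverse) (auto simp: unitary_mat_adjoint_mult)

lemma unitary_mat_cancel_vec:
  assumes W: "unitary_mat W" "W \<in> carrier_mat n n" and y: "y \<in> carrier_vec n"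
  shows "mat_adjoint W *\<^sub>v (W *\<^sub>v y) = y" and "W *\<^sub>v (mat_adjoint W *\<^sub>v y) = y"
proof -
  have Wa: "mat_adjoint W \<in> carrier_mat n n" using W by (metis mat_adjoint_carrier_mat)
  show "mat_adjoint W *\<^sub>v (W *\<^sub>v y) = y"
    using assoc_mult_mat_vec[OF Wa W(2) y] unitary_mat_adjoint_mult[OF W] y by simp
  show "W *\<^sub>v (mat_adjoint W *\<^sub>v y) = y"
    using assoc_mult_mat_vec[OF W(2) Wa y] unitary_mat_mult_adjoint[OF W] y by simp
qed

lemma adjoint_sandwich_mult_mat_vec:
  fixes A W :: "complex mat"
  assumes "A \<in> carrier_mat n n" and W: "W \<in> carrier_mat n n" and y: "y \<in> carrier_vec n"
  shows "(mat_adjoint W * A * W) *\<^sub>v y = mat_adjoint W *\<^sub>v (A *\<^sub>v (W *\<^sub>v y))"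
proof -
  have Wa: "mat_adjoint W \<in> carrier_mat n n" using W by (metis mat_adjoint_carrier_mat)
  have "(mat_adjoint W * A * W) *\<^sub>v y = (mat_adjoint W * A) *\<^sub>v (W *\<^sub>v y)"
    by (rule assoc_mult_mat_vec) (use assms Wa in auto)
  also have "\<dots> = mat_adjoint W *\<^sub>v (A *\<^sub>v (W *\<^sub>v y))"
    by (rule assoc_mult_mat_vec) (use assms Wa in auto)
  finally show ?thesis .
qed

lemma mat_adjoint_adjoint_sandwich:
  fixes A W :: "complex mat"
  assumes A: "A \<in> carrier_mat n n" and W: "W \<in> carrier_mat n n"
  shows "mat_adjoint (mat_adjoint W * A * W) = mat_adjoint W * mat_adjoint A * W"
proof -
  have Wa: "mat_adjoint W \<in> carrier_mat n n" using W by (metis mat_adjoint_carrier_mat)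
  have "mat_adjoint (mat_adjoint W * A * W) = mat_adjoint W * (mat_adjoint A * W)"
    using mat_adjoint_mult[OF mult_carrier_mat[OF Wa A] W] mat_adjoint_mult[OF Wa A] by simp
  also have "\<dots> = mat_adjoint W * mat_adjoint A * W"
    using assoc_mult_mat[OF Wa _ W, of "mat_adjoint A"] A by simp
  finally show ?thesis .
qed

definition conjugation_by :: "complex mat \<Rightarrow> complex vec \<Rightarrow> complex vec" where
  "conjugation_by W x = mat_adjoint W *\<^sub>v conjugate (W *\<^sub>v x)"

lemma conjugation_by_carrier:
  "W \<in> carrier_mat n n \<Longrightarrow> x \<in> carrier_vec n \<Longrightarrow> conjugation_by W x \<in> carrier_vec n"
  unfolding conjugation_by_def by (metis carrier_vec_conjugate mat_adjoint_carrier_mat mult_mat_vec_carrier)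

lemma cscalar_prod_conjugation_by:
  assumes W: "unitary_mat W" "W \<in> carrier_mat n n" and x: "x \<in> carrier_vec n" and y: "y \<in> carrier_vec n"
  shows "conjugation_by W x \<bullet>c conjugation_by W y = y \<bullet>c x"
proof -
  let ?a = "conjugate (W *\<^sub>v x)" and ?b = "conjugate (W *\<^sub>v y)"
  have Wa: "mat_adjoint W \<in> carrier_mat n n" using W by (metis mat_adjoint_carrier_mat)
  have a: "?a \<in> carrier_vec n" and b: "?b \<in> carrier_vec n" using W x y by auto
  have "conjugation_by W x \<bullet>c conjugation_by W y = ?a \<bullet>c (W *\<^sub>v (mat_adjoint W *\<^sub>v ?b))"
    unfolding conjugation_by_def
    using mat_adjoint_cscalar_prod[OF Wa a mult_mat_vec_carrier[OF Wa b]] by simp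
  also have "\<dots> = ?a \<bullet>c ?b" using unitary_mat_cancel_vec(2)[OF W b] by simp
  also have "\<dots> = (W *\<^sub>v y) \<bullet>c (W *\<^sub>v x)"
    using W x y by (simp add: comm_scalar_prod[of _ n])
  also have "\<dots> = y \<bullet>c (mat_adjoint W *\<^sub>v (W *\<^sub>v x))"
    by (rule mat_adjoint_cscalar_prod) (use W x y in auto)
  also have "\<dots> = y \<bullet>c x" using unitary_mat_cancel_vec(1)[OF W x] by simp
  finally show ?thesis .
qed

lemma eigenvector_mat_adjoint_conjugation_by:
  assumes W: "unitary_mat W" "W \<in> carrier_mat n n"
    and S: "S \<in> carrier_mat n n" "transpose_mat S = S"
    and T: "T = mat_adjoint W * S * W" and x: "eigenvector T x l"
  shows "eigenvector (mat_adjoint T) (conjugation_by W x) (cnj l)"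
proof -
  have Wa: "mat_adjoint W \<in> carrier_mat n n" using W by (metis mat_adjoint_carrier_mat)
  have Tc: "T \<in> carrier_mat n n" unfolding T using W S Wa by (metis mult_carrier_mat)
  from x Tc have xc: "x \<in> carrier_vec n" and "x \<noteq> 0\<^sub>v n" and Tx: "T *\<^sub>v x = l \<cdot>\<^sub>v x"
    by (auto simp: eigenvector_def)
  have Wx: "W *\<^sub>v x \<in> carrier_vec n" and SWx: "S *\<^sub>v (W *\<^sub>v x) \<in> carrier_vec n"
    using W S xc by auto
  have Cx: "conjugation_by W x \<in> carrier_vec n" by (rule conjugation_by_carrier[OF W(2) xc])
  have Sa: "mat_adjoint S \<in> carrier_mat n n" using S by (metis mat_adjoint_carrier_mat)
  have "mat_adjoint T *\<^sub>v conjugation_by W x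
      = mat_adjoint W *\<^sub>v (mat_adjoint S *\<^sub>v (W *\<^sub>v conjugation_by W x))"
    unfolding T mat_adjoint_adjoint_sandwich[OF S(1) W(2)] by (rule adjoint_sandwich_mult_mat_vec[OF Sa W(2) Cx])
  also have "W *\<^sub>v conjugation_by W x = conjugate (W *\<^sub>v x)"
    unfolding conjugation_by_def using unitary_mat_cancel_vec(2)[OF W] Wx by simp
  also have "mat_adjoint S *\<^sub>v conjugate (W *\<^sub>v x) = conjugate (S *\<^sub>v (W *\<^sub>v x))"
    by (rule mat_adjoint_mult_vec_conjugate_symmetric[OF S Wx])
  also have "S *\<^sub>v (W *\<^sub>v x) = W *\<^sub>v (T *\<^sub>v x)"
    unfolding T adjoint_sandwich_mult_mat_vec[OF S(1) W(2) xc] unitary_mat_cancel_vec(2)[OF W SWx] ..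
  also have "mat_adjoint W *\<^sub>v conjugate (W *\<^sub>v (T *\<^sub>v x)) = cnj l \<cdot>\<^sub>v conjugation_by W x"
    unfolding Tx conjugation_by_def mult_mat_vec[OF W(2) xc] conjugate_smult_vec
    using Wx by (simp add: mult_mat_vec[OF Wa])
  finally have "mat_adjoint T *\<^sub>v conjugation_by W x = cnj l \<cdot>\<^sub>v conjugation_by W x" .
  moreover have "conjugation_by W x \<noteq> 0\<^sub>v n"
  proof
    assume "conjugation_by W x = 0\<^sub>v n"
    then have "x \<bullet>c x = 0" using cscalar_prod_conjugation_by[OF W xc xc] by simp
    with \<open>x \<noteq> 0\<^sub>v n\<close> xc show False by simp
  qed
  ultimately show ?thesis unfolding eigenvector_def using Tc Cx by simp
qed

lemma unitarily_equivalent_complex_symmetricE: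
  assumes T: "T \<in> carrier_mat n n" and "complex_symmetric S" and "unitarily_equivalent T S"
  obtains W where "unitary_mat W" "W \<in> carrier_mat n n"
    and "S \<in> carrier_mat n n" "transpose_mat S = S" and "T = mat_adjoint W * S * W"
proof -
  obtain W where W: "unitary_mat W" and dim: "dim_row W = dim_row S" and TW: "T = mat_adjoint W * S * W"
    using assms(3) unfolding unitarily_equivalent_def by blast
  have "dim_col W = dim_row W" using W unfolding unitary_mat_def by auto
  moreover have "dim_row T = dim_col W" unfolding TW by simp
  ultimately have "W \<in> carrier_mat n n" "dim_row S = n" using W T dim by (auto simp: unitary_mat_def)
  then show ?thesis using that W TW assms(2) unfolding complex_symmetric_def by auto
qed

section \<open>Gram matrices\<close>

definition gram_mat :: "nat \<Rightarrow> (nat \<Rightarrow> complex vec) \<Rightarrow> complex mat" where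
  "gram_mat n f = mat_adjoint (mat_of_cols n (map f [0..<n])) * mat_of_cols n (map f [0..<n])"

lemma dim_gram_mat [simp]: "dim_row (gram_mat n f) = n" "dim_col (gram_mat n f) = n"
  by (simp_all add: gram_mat_def mat_of_cols_def)

lemma index_gram_mat:
  assumes "\<And>k. k < n \<Longrightarrow> f k \<in> carrier_vec n" and "i < n" and "j < n"
  shows "gram_mat n f $$ (i, j) = f j \<bullet>c f i"
proof -
  let ?F = "mat_of_cols n (map f [0..<n])"
  have "gram_mat n f $$ (i, j) = (\<Sum>k = 0..<n. cnj (?F $$ (k, i)) * ?F $$ (k, j))"
    unfolding gram_mat_def using assms(2,3) mat_of_cols_map_upt_carrier[of n f n]
    by (simp add: scalar_prod_def)
  also have "\<dots> = f j \<bullet>c f i"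
  proof -
    have "dim_vec (f i) = n" using assms(1)[OF assms(2)] by simp
    then show ?thesis using assms(2,3) by (simp add: scalar_prod_def ac_simps)
  qed
  finally show ?thesis .
qed

lemma similar_mat_diag_scaling:
  fixes B :: "'a :: comm_ring_1 mat"
  assumes "B \<in> carrier_mat n n" and "\<And>i. i < n \<Longrightarrow> e i * d i = 1"
  shows "similar_mat (mat_diag n e * B * mat_diag n d) B"
proof -
  have "d i * e i = 1" if "i < n" for i using assms(2)[OF that] by (simp add: mult.commute)
  then have "mat_diag n e * mat_diag n d = 1\<^sub>m n" "mat_diag n d * mat_diag n e = 1\<^sub>m n"
    unfolding mat_diag_diag by (auto intro!: eq_matI simp: mat_diag_def assms(2))
  moreover have "mat_diag n e * B * mat_diag n d \<in> carrier_mat n n"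
    using assms(1) by (metis mat_diag_dim mult_carrier_mat)
  ultimately show ?thesis
    unfolding similar_mat_def similar_mat_wit_def Let_def using assms(1)
    by (rule_tac exI[of _ "mat_diag n e"], rule_tac exI[of _ "mat_diag n d"]) (auto simp: mat_diag_def)
qed

lemma char_poly_gram_mat_rescaled_conjugates:
  assumes u: "\<And>i. i < n \<Longrightarrow> u i \<in> carrier_vec n" and w: "\<And>i. i < n \<Longrightarrow> w i \<in> carrier_vec n"
    and u_unit: "\<And>i. i < n \<Longrightarrow> u i \<bullet>c u i = 1" and v_unit: "\<And>i. i < n \<Longrightarrow> v i \<bullet>c v i = 1"
    and vw: "\<And>i. i < n \<Longrightarrow> v i = c i \<cdot>\<^sub>v w i"
    and wu: "\<And>i j. i < n \<Longrightarrow> j < n \<Longrightarrow> w j \<bullet>c w i = u i \<bullet>c u j"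
  shows "char_poly (gram_mat n v) = char_poly (gram_mat n u)"
proof -
  have v_inner: "v j \<bullet>c v i = cnj (c i) * (u i \<bullet>c u j) * c j" if "i < n" "j < n" for i j
  proof -
    have "v j \<bullet>c v i = (c j \<cdot>\<^sub>v w j) \<bullet> (cnj (c i) \<cdot>\<^sub>v conjugate (w i))"
      using vw that by (simp add: conjugate_smult_vec)
    also have "\<dots> = c j * cnj (c i) * (w j \<bullet>c w i)"
      using w[OF \<open>i < n\<close>] w[OF \<open>j < n\<close>] carrier_vec_conjugate[OF w[OF \<open>i < n\<close>]]
      by (simp add: smult_scalar_prod_distrib[of _ n] scalar_prod_smult_distrib[of _ n])
    finally show ?thesis using wu[OF that] by simp
  qed
  have unimodular: "cnj (c i) * c i = 1" if "i < n" for i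
  proof -
    have "1 = v i \<bullet>c v i" using v_unit[OF that] by simp
    also have "\<dots> = cnj (c i) * c i" using v_inner[OF that that] u_unit[OF that] by simp
    finally show ?thesis by simp
  qed
  have Gu: "gram_mat n u \<in> carrier_mat n n" by (rule carrier_matI) simp_all
  then have G: "transpose_mat (gram_mat n u) \<in> carrier_mat n n" by simp
  have gram_v: "gram_mat n v = mat_diag n (\<lambda>i. cnj (c i)) * transpose_mat (gram_mat n u) * mat_diag n c"
  proof (rule eq_matI)
    fix i j assume "i < dim_row (mat_diag n (\<lambda>i. cnj (c i)) * transpose_mat (gram_mat n u) * mat_diag n c)"
      and "j < dim_col (mat_diag n (\<lambda>i. cnj (c i)) * transpose_mat (gram_mat n u) * mat_diag n c)"
    then have ij: "i < n" "j < n" by (auto simp: mat_diag_def)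
    have v: "v k \<in> carrier_vec n" if "k < n" for k using vw[OF that] w[OF that] by simp
    show "gram_mat n v $$ (i, j)
        = (mat_diag n (\<lambda>i. cnj (c i)) * transpose_mat (gram_mat n u) * mat_diag n c) $$ (i, j)"
      using ij v_inner[OF ij] index_gram_mat[of n v, OF v ij] index_gram_mat[of n u, OF u ij(2,1)]
      unfolding mat_diag_mult_left[OF G] by (simp add: mat_diag_mult_right[of _ n n])
  qed (auto simp: mat_diag_def)
  have "similar_mat (gram_mat n v) (transpose_mat (gram_mat n u))"
    unfolding gram_v by (rule similar_mat_diag_scaling[OF G unimodular])
  then have "char_poly (gram_mat n v) = char_poly (transpose_mat (gram_mat n u))"
    by (rule char_poly_similar)
  also have "\<dots> = char_poly (gram_mat n u)" by (rule char_poly_transpose_mat[OF Gu])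
  finally show ?thesis .
qed

theorem corollary1:
  fixes T :: "complex mat" and n :: nat
    and lam :: "nat \<Rightarrow> complex" and u v :: "nat \<Rightarrow> complex vec"
  assumes T: "T \<in> carrier_mat n n"
    and distinct: "inj_on lam {..<n}"
    and u_eig: "\<And>i. i < n \<Longrightarrow> eigenvector T (u i) (lam i)"
    and u_unit: "\<And>i. i < n \<Longrightarrow> u i \<bullet>c u i = 1"
    and v_eig: "\<And>i. i < n \<Longrightarrow> eigenvector (mat_adjoint T) (v i) (cnj (lam i))"
    and v_unit: "\<And>i. i < n \<Longrightarrow> v i \<bullet>c v i = 1"
    and sym: "\<exists>S. complex_symmetric S \<and> unitarily_equivalent T S"
  shows "char_poly (mat_adjoint (mat_of_cols n (map u [0..<n])) * mat_of_cols n (map u [0..<n]))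
       = char_poly (mat_adjoint (mat_of_cols n (map v [0..<n])) * mat_of_cols n (map v [0..<n]))"
proof -
  obtain W S where W: "unitary_mat W" "W \<in> carrier_mat n n"
    and S: "S \<in> carrier_mat n n" "transpose_mat S = S" and TW: "T = mat_adjoint W * S * W"
    using sym unitarily_equivalent_complex_symmetricE[OF T] by metis
  have u: "u i \<in> carrier_vec n" if "i < n" for i using u_eig[OF that] T by (simp add: eigenvector_def)
  define w where "w i = conjugation_by W (u i)" for i
  have w_eig: "eigenvector (mat_adjoint T) (w i) (cnj (lam i))" if "i < n" for i
    unfolding w_def by (rule eigenvector_mat_adjoint_conjugation_by[OF W S TW u_eig[OF that]])
  have "\<exists>c. v i = c \<cdot>\<^sub>v w i" if "i < n" for i
    by (rule eigenvectors_mat_adjoint_parallel[OF T distinct u_eig that v_eig[OF that] w_eig[OF that]])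
  then obtain c where vw: "\<And>i. i < n \<Longrightarrow> v i = c i \<cdot>\<^sub>v w i" by metis
  have wu: "w j \<bullet>c w i = u i \<bullet>c u j" if "i < n" "j < n" for i j
    unfolding w_def by (rule cscalar_prod_conjugation_by[OF W u[OF that(2)] u[OF that(1)]])
  have w: "w i \<in> carrier_vec n" if "i < n" for i
    unfolding w_def by (rule conjugation_by_carrier[OF W(2) u[OF that]])
  have "char_poly (gram_mat n v) = char_poly (gram_mat n u)"
    by (rule char_poly_gram_mat_rescaled_conjugates[OF u w u_unit v_unit vw wu])
  then show ?thesis unfolding gram_mat_def by simp
qed

end
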